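(* For every finite field $\mathbb{F}_q$, the eigenvalues of the adjacency matrix of the unit-graph on $\operatorname{Mat}_2(\mathbb{F}_q)$ are exactly: $q^4-q^3-q^2+q$ with multiplicity $1$, $q$ with multiplicity $q^4-q^3-q^2+q$, and $q-q^2$ with multiplicity $q^3+q^2-q-1$.
   Context: The unit-graph on $\operatorname{Mat}_2(\mathbb{F}_q)$ is the graph with vertex set $\operatorname{Mat}_2(\mathbb{F}_q)$ in which $A$ and $B$ are adjacent iff $B - A \in \operatorname{GL}_2(\mathbb{F}_q)$. *)

theory Defs
  imports "HOL-Analysis.Analysis" "HOL-Computational_Algebra.Polynomial"
begin

definition unit_graph_adj :: "'a::field ^2^2 \<Rightarrow> 'a ^2^2 \<Rightarrow> bool" where
  "unit_graph_adj A B \<longleftrightarrow> invertible (B - A)"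

definition unit_graph_adjmat :: "real ^ ('a::{field,finite} ^2^2) ^ ('a ^2^2)" where
  "unit_graph_adjmat = (\<chi> A B. if unit_graph_adj A B then 1 else 0)"

definition charpoly :: "real ^'n::finite ^'n \<Rightarrow> real poly" where
  "charpoly M = det (\<chi> i j. (if i = j then [:0, 1:] else 0) - [:M $ i $ j:])"

end

theory Submission
  imports Defs
begin

(* The unit-graph is strongly regular.  Its adjacency matrix M has constant line sums
   k = |GL_2(F_q)|, and the number of common neighbours of A and C is the number of
   splittings C - A = X + Y into invertible X, Y; by inclusion-exclusion this depends only
   on the number of splittings into singular ones, which is invariant under D |-> P D Q
   (P, Q invertible) and hence depends only on the rank of C - A.  Consequently (M - q I)(M - (q - q^2) I) is a
   multiple of the all-ones matrix J.  The algebra spanned by I, M and J then contains three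
   orthogonal idempotents that factor x I - M, and their traces are the multiplicities. *)

section \<open>Characteristic polynomials from idempotents\<close>

lemma poly_det:
  fixes A :: "real poly ^'n::finite^'n"
  shows "poly (det A) x = det (\<chi> i j. poly (A $ i $ j) x)"
  unfolding det_def by (simp add: poly_sum poly_prod of_int_poly)

lemma coeff_1_prod_linear:
  fixes a :: "'i \<Rightarrow> real"
  assumes "finite S"
  shows "coeff (\<Prod>i\<in>S. [:1, a i:]) 1 = (\<Sum>i\<in>S. a i)"
proof -
  have "coeff (\<Prod>i\<in>S. [:1, a i:]) 1 = (\<Sum>i\<in>S. a i) \<and> coeff (\<Prod>i\<in>S. [:1, a i:]) 0 = 1"
    using assms
  proof (induction S rule: finite_induct)
    case (insert x F)
    let ?p = "\<Prod>i\<in>F. [:1, a i:]"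
    have "(\<Prod>i\<in>insert x F. [:1, a i:]) = ?p + pCons 0 (smult (a x) ?p)"
      using insert by (simp add: algebra_simps)
    then show ?case using insert by (simp add: coeff_pCons)
  qed simp
  then show ?thesis ..
qed

text \<open>Only the identity permutation contributes to the linear coefficient: any other
  permutation moves two indices, and each moved index contributes a factor divisible by X.\<close>
lemma coeff_1_det_one_plus_X:
  fixes E :: "real^'n::finite^'n"
  shows "coeff (det (\<chi> i j. [:if i = j then 1 else 0, E $ i $ j:])) 1 = trace E"
proof -
  let ?A = "(\<chi> i j. [:if i = j then 1 else 0, E $ i $ j:]) :: real poly^'n^'n"
  let ?term = "\<lambda>p. of_int (sign p) * (\<Prod>i\<in>UNIV. ?A $ i $ p i)"
  have vanish: "coeff (?term p) 1 = 0" if p: "p permutes UNIV" "p \<noteq> id" for p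
  proof -
    obtain i where i: "p i \<noteq> i" using p(2) by (metis eq_id_iff)
    have pj: "p (p i) \<noteq> p i" using i p(1) by (metis permutes_inj injD)
    have "(\<Prod>k\<in>UNIV. ?A $ k $ p k) = ?A $ i $ p i * (\<Prod>k\<in>UNIV - {i}. ?A $ k $ p k)"
      by (meson finite UNIV_I prod.remove)
    also have "(\<Prod>k\<in>UNIV - {i}. ?A $ k $ p k)
        = ?A $ p i $ p (p i) * (\<Prod>k\<in>UNIV - {i} - {p i}. ?A $ k $ p k)"
      using i by (intro prod.remove) auto
    finally have "(\<Prod>k\<in>UNIV. ?A $ k $ p k) = [:0, E $ i $ p i:] * [:0, E $ p i $ p (p i):]
        * (\<Prod>k\<in>UNIV - {i} - {p i}. ?A $ k $ p k)"
      using i pj by (simp add: mult.assoc)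
    then show ?thesis by (simp add: of_int_poly coeff_pCons)
  qed
  have "coeff (det ?A) 1 = (\<Sum>p\<in>{p. p permutes UNIV}. coeff (?term p) 1)"
    unfolding det_def by (simp add: coeff_sum)
  also have "\<dots> = (\<Sum>p\<in>{id}. coeff (?term p) 1)"
    using vanish by (intro sum.mono_neutral_right) (auto simp: finite_permutations permutes_id)
  also have "\<dots> = trace E"
    using coeff_1_prod_linear[of UNIV "\<lambda>i. E $ i $ i"] by (simp add: sign_id trace_def)
  finally show ?thesis .
qed

lemma poly_multiplicative_eq_power:
  fixes Q :: "real poly"
  assumes mult: "\<And>u v. poly Q (u * v) = poly Q u * poly Q v" and one: "poly Q 1 = 1"
  shows "poly Q u = u ^ degree Q"
proof -
  have "coeff Q (degree Q) \<noteq> 0" using one by auto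
  moreover have "Q \<circ>\<^sub>p [:0, u:] = smult (poly Q u) Q"
    by (rule poly_eq_poly_eq_iff[THEN iffD1]) (auto simp: poly_pcompose mult)
  then have "u ^ degree Q * coeff Q (degree Q) = poly Q u * coeff Q (degree Q)"
    by (metis coeff_pcompose_linear coeff_smult)
  ultimately show ?thesis by simp
qed

lemma matrix_add_rdistrib:
  fixes A B C :: "'a::semiring_1^'n::finite^'n"
  shows "(A + B) ** C = A ** C + B ** C"
  by (simp add: matrix_matrix_mult_def vec_eq_iff sum.distrib algebra_simps)

lemma one_plus_scaleR_idempotent_mult:
  fixes E :: "real^'n::finite^'n"
  assumes "E ** E = E"
  shows "(mat 1 + s *\<^sub>R E) ** (mat 1 + t *\<^sub>R E) = mat 1 + (s + t + s * t) *\<^sub>R E"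
  using assms by (simp add: matrix_add_ldistrib matrix_add_rdistrib matrix_scalar_ac
      scalar_matrix_assoc[symmetric] algebra_simps)

text \<open>The map \<open>u \<mapsto> det (I + (u - 1) E)\<close> is a multiplicative polynomial, hence a
  monomial \<open>u ^ m\<close>, and \<open>m\<close> is read off from the linear coefficient of \<open>det (I + X E)\<close>.\<close>
lemma det_one_plus_scaleR_idempotent:
  fixes E :: "real^'n::finite^'n"
  assumes idem: "E ** E = E" and m: "real m = trace E"
  shows "det (mat 1 + s *\<^sub>R E) = (1 + s) ^ m"
proof -
  define P where "P = det ((\<chi> i j. [:if i = j then 1 else 0, E $ i $ j:]) :: real poly^'n^'n)"
  have poly_P: "poly P s = det (mat 1 + s *\<^sub>R E)" for s
    unfolding P_def poly_det by (intro arg_cong[where f=det]) (simp add: vec_eq_iff mat_def)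
  define Q where "Q = P \<circ>\<^sub>p [:-1, 1:]"
  have poly_Q: "poly Q u = det (mat 1 + (u - 1) *\<^sub>R E)" for u
    by (simp add: Q_def poly_pcompose poly_P)
  have "poly Q (u * v) = poly Q u * poly Q v" for u v
  proof -
    have "u * v - 1 = (u - 1) + (v - 1) + (u - 1) * (v - 1)" by (simp add: algebra_simps)
    then show ?thesis
      by (simp only: poly_Q det_mul[symmetric] one_plus_scaleR_idempotent_mult[OF idem])
  qed
  moreover have "poly Q 1 = 1" by (simp add: poly_Q det_I)
  ultimately have Q_power: "poly Q u = u ^ degree Q" for u
    by (rule poly_multiplicative_eq_power)
  have "P = [:1, 1:] ^ degree Q"
    by (rule poly_eq_poly_eq_iff[THEN iffD1]) (auto simp: poly_P Q_power[symmetric] poly_Q)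
  then have "trace E = coeff ([:1, 1:] ^ degree Q) 1"
    using coeff_1_det_one_plus_X[of E] by (simp add: P_def)
  also have "\<dots> = real (degree Q)"
    using coeff_linear_poly_power[of 1 "degree Q" "1::real" 1] by (cases "degree Q = 0") simp_all
  finally have "degree Q = m" using m by simp
  then show ?thesis using Q_power[of "1 + s"] by (simp add: poly_Q)
qed

text \<open>\<open>comb_IMJ M a b c\<close> is \<open>a I + b M + c J\<close>, where \<open>J\<close> is the all-ones matrix.\<close>
definition comb_IMJ :: "real^'n::finite^'n \<Rightarrow> real \<Rightarrow> real \<Rightarrow> real \<Rightarrow> real^'n^'n" where
  "comb_IMJ M a b c = (\<chi> i j. a * (if i = j then 1 else 0) + b * M $ i $ j + c)"

lemma comb_IMJ_eqI: "a = a' \<Longrightarrow> b = b' \<Longrightarrow> c = c' \<Longrightarrow> comb_IMJ M a b c = comb_IMJ M a' b' c'"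
  by simp

lemma mat_one_plus_scaleR_comb_IMJ:
  "mat 1 + t *\<^sub>R comb_IMJ M a b c = comb_IMJ M (1 + t * a) (t * b) (t * c)"
  by (simp add: comb_IMJ_def mat_def vec_eq_iff algebra_simps)

lemma trace_comb_IMJ:
  "trace (comb_IMJ M a b c) = (a + c) * real CARD('n) + b * trace M"
  for M :: "real^'n::finite^'n"
  by (simp add: trace_def comb_IMJ_def sum.distrib sum_distrib_left algebra_simps)

lemma sum_delta_left_real: "(\<Sum>k\<in>UNIV. (if i = k then 1 else 0) * f k) = (f i :: real)"
  for i :: "'n::finite"
  by (simp add: if_distrib[of "\<lambda>x. x * _"] cong: if_cong)

lemma sum_delta_right_real: "(\<Sum>k\<in>UNIV. f k * (if k = j then 1 else 0)) = (f j :: real)"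
  for j :: "'n::finite"
  by (simp add: if_distrib cong: if_cong)

lemma comb_IMJ_mult:
  fixes M :: "real^'n::finite^'n"
  assumes M2: "M ** M = comb_IMJ M \<beta> \<alpha> \<gamma>"
    and row: "\<And>i. (\<Sum>k\<in>UNIV. M $ i $ k) = \<kappa>" and col: "\<And>j. (\<Sum>k\<in>UNIV. M $ k $ j) = \<kappa>"
  shows "comb_IMJ M a b c ** comb_IMJ M a' b' c' = comb_IMJ M (a * a' + \<beta> * b * b')
    (a * b' + b * a' + \<alpha> * b * b') (a * c' + c * a' + \<gamma> * b * b' + \<kappa> * (b * c' + c * b')
      + real CARD('n) * c * c')"
proof -
  let ?d = "\<lambda>i k::'n. (if i = k then 1 else 0) :: real"
  have sq: "(\<Sum>k\<in>UNIV. M $ i $ k * M $ k $ j) = \<beta> * ?d i j + \<alpha> * M $ i $ j + \<gamma>" for i j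
    using arg_cong[OF M2, of "\<lambda>X. X $ i $ j"] by (simp add: matrix_matrix_mult_def comb_IMJ_def)
  have "(\<Sum>k\<in>UNIV. (a * ?d i k + b * M $ i $ k + c) * (a' * ?d k j + b' * M $ k $ j + c'))
      = a * a' * (\<Sum>k\<in>UNIV. ?d i k * ?d k j) + a * b' * (\<Sum>k\<in>UNIV. ?d i k * M $ k $ j)
        + a * c' * (\<Sum>k\<in>UNIV. ?d i k) + b * a' * (\<Sum>k\<in>UNIV. M $ i $ k * ?d k j)
        + b * b' * (\<Sum>k\<in>UNIV. M $ i $ k * M $ k $ j) + b * c' * (\<Sum>k\<in>UNIV. M $ i $ k)
        + c * a' * (\<Sum>k\<in>UNIV. ?d k j) + c * b' * (\<Sum>k\<in>UNIV. M $ k $ j) + c * c' * real CARD('n)"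
    for i j
  proof -
    have "(a * ?d i k + b * M $ i $ k + c) * (a' * ?d k j + b' * M $ k $ j + c')
        = a * a' * (?d i k * ?d k j) + a * b' * (?d i k * M $ k $ j) + a * c' * ?d i k
          + b * a' * (M $ i $ k * ?d k j) + b * b' * (M $ i $ k * M $ k $ j) + b * c' * M $ i $ k
          + c * a' * ?d k j + c * b' * M $ k $ j + c * c'" for k
      by (simp add: algebra_simps)
    then show ?thesis by (simp only: sum.distrib sum_distrib_left[symmetric]) simp
  qed
  also have "\<dots> i j = (a * a' + \<beta> * b * b') * ?d i j + (a * b' + b * a' + \<alpha> * b * b') * M $ i $ j
      + (a * c' + c * a' + \<gamma> * b * b' + \<kappa> * (b * c' + c * b') + real CARD('n) * c * c')" for i j
    by (simp only: sum_delta_left_real sum_delta_right_real sq row col) (simp add: algebra_simps)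
  finally show ?thesis
    by (simp add: comb_IMJ_def matrix_matrix_mult_def vec_eq_iff)
qed

text \<open>Compare the \<open>J\<close>-coefficients of \<open>(J M) M = J (M M)\<close>.\<close>
lemma line_sum_quadratic_relation:
  fixes M :: "real^'n::finite^'n"
  assumes M2: "M ** M = comb_IMJ M (- (r * s)) (r + s) \<gamma>"
    and row: "\<And>i. (\<Sum>j\<in>UNIV. M $ i $ j) = \<kappa>" and col: "\<And>j. (\<Sum>i\<in>UNIV. M $ i $ j) = \<kappa>"
  shows "\<gamma> * real CARD('n) = (\<kappa> - r) * (\<kappa> - s)"
proof -
  note mult = comb_IMJ_mult[OF M2 row col]
  have "comb_IMJ M 0 0 1 ** comb_IMJ M 0 1 0 ** comb_IMJ M 0 1 0
      = comb_IMJ M 0 0 1 ** (comb_IMJ M 0 1 0 ** comb_IMJ M 0 1 0)"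
    by (simp add: matrix_mul_assoc)
  then have "comb_IMJ M 0 0 (\<kappa> * \<kappa>) = comb_IMJ M 0 0 (\<gamma> * real CARD('n) + \<kappa> * (r + s) - r * s)"
    unfolding mult by (simp add: algebra_simps)
  then show ?thesis
    by (auto simp: comb_IMJ_def vec_eq_iff algebra_simps)
qed

text \<open>A matrix with constant line sums \<open>\<kappa>\<close> and \<open>(M - r I)(M - s I) = \<gamma> J\<close> (e.g. the adjacency
  matrix of a strongly regular graph) decomposes as \<open>M = \<kappa> E\<^sub>0 + r E\<^sub>1 + s E\<^sub>2\<close> along the
  orthogonal idempotents \<open>E\<^sub>0 = J / n\<close>, \<open>E\<^sub>1 = (M - s I - (\<kappa> - s) E\<^sub>0) / (r - s)\<close> and
  \<open>E\<^sub>2\<close> (with \<open>r\<close> and \<open>s\<close> exchanged); the multiplicities are their traces.\<close>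
lemma charpoly_eq_if_quadratic_mod_all_ones:
  fixes M :: "real^'n::finite^'n"
  assumes M2: "M ** M = comb_IMJ M (- (r * s)) (r + s) \<gamma>"
    and row: "\<And>i. (\<Sum>j\<in>UNIV. M $ i $ j) = \<kappa>" and col: "\<And>j. (\<Sum>i\<in>UNIV. M $ i $ j) = \<kappa>"
    and trace: "trace M = 0" and "r \<noteq> s"
    and m1: "real m1 = (- (real CARD('n) - 1) * s - \<kappa>) / (r - s)"
    and m2: "real m2 = (- (real CARD('n) - 1) * r - \<kappa>) / (s - r)"
  shows "charpoly M = [:- \<kappa>, 1:] * [:- r, 1:] ^ m1 * [:- s, 1:] ^ m2"
proof -
  define n where "n = real CARD('n)"
  have "n \<noteq> 0" by (simp add: n_def)
  note mult = comb_IMJ_mult[OF M2 row col, folded n_def]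
  have \<gamma>: "\<gamma> * n = (\<kappa> - r) * (\<kappa> - s)"
    using line_sum_quadratic_relation[OF M2 row col] by (simp add: n_def)
  then have \<gamma>_eq: "\<gamma> = (\<kappa> - r) * (\<kappa> - s) / n"
    using \<open>n \<noteq> 0\<close> by (simp add: field_simps)
  define E where "E r s = comb_IMJ M (- s / (r - s)) (1 / (r - s)) (- (\<kappa> - s) / (n * (r - s)))"
    for r s
  define E0 where "E0 = comb_IMJ M 0 0 (1 / n)"
  have "E0 ** E0 = E0"
    unfolding E0_def mult by (rule comb_IMJ_eqI) (simp_all add: \<open>n \<noteq> 0\<close> power2_eq_square)
  have idem: "E u v ** E u v = E u v" if uv: "(u, v) \<in> {(r, s), (s, r)}" for u v
  proof -
    have "u \<noteq> v" "r + s = u + v" "r * s = u * v" "\<gamma> * n = (\<kappa> - u) * (\<kappa> - v)"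
      using uv \<open>r \<noteq> s\<close> \<gamma> by (auto simp: algebra_simps)
    then show ?thesis
      using \<open>n \<noteq> 0\<close> unfolding E_def mult
      by (intro comb_IMJ_eqI) (simp_all add: divide_simps, simp_all add: algebra_simps)
  qed
  have factor: "comb_IMJ M x (-1) 0 = (mat 1 + (x - \<kappa> - 1) *\<^sub>R E0) ** (mat 1 + (x - r - 1) *\<^sub>R E r s)
      ** (mat 1 + (x - s - 1) *\<^sub>R E s r)" for x
    using \<open>r \<noteq> s\<close> \<open>n \<noteq> 0\<close> unfolding E_def E0_def mat_one_plus_scaleR_comb_IMJ mult
    by (intro comb_IMJ_eqI) (simp_all add: divide_simps \<gamma>_eq, simp_all add: algebra_simps)
  have "real 1 = trace E0" "real m1 = trace (E r s)" "real m2 = trace (E s r)"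
    using \<open>r \<noteq> s\<close> \<open>n \<noteq> 0\<close>
    by (simp_all add: E0_def E_def trace_comb_IMJ trace m1 m2 n_def[symmetric] divide_simps,
        simp_all add: algebra_simps)
  note det_factor = det_one_plus_scaleR_idempotent[OF \<open>E0 ** E0 = E0\<close> this(1)]
    det_one_plus_scaleR_idempotent[OF idem this(2)] det_one_plus_scaleR_idempotent[OF idem this(3)]
  have "poly (charpoly M) x = det (comb_IMJ M x (-1) 0)" for x
    unfolding charpoly_def poly_det by (intro arg_cong[where f=det]) (simp add: vec_eq_iff comb_IMJ_def)
  then have "poly (charpoly M) x = (x - \<kappa>) * (x - r) ^ m1 * (x - s) ^ m2" for x
    by (simp add: factor det_mul det_factor)
  then show ?thesis
    by (intro poly_eq_poly_eq_iff[THEN iffD1] ext) (simp add: algebra_simps)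
qed

section \<open>Counting singular 2 x 2 matrices over a finite field\<close>

lemma sum_if_eq_real:
  fixes z :: "'a::finite"
  shows "(\<Sum>d\<in>UNIV. if d = z then (X::real) else Y) = X + (real CARD('a) - 1) * Y"
proof -
  have "(\<Sum>d\<in>UNIV. if d = z then X else Y) = (\<Sum>d\<in>UNIV. (if d = z then X - Y else 0) + Y)"
    by (intro sum.cong) auto
  then show ?thesis by (simp add: sum.distrib algebra_simps)
qed

lemma sum_if_mem_real:
  fixes S :: "'a::finite set"
  shows "(\<Sum>d\<in>UNIV. if d \<in> S then (X::real) else Y) = real (card S) * X + (real CARD('a) - real (card S)) * Y"
proof -
  have "(\<Sum>d\<in>UNIV. if d \<in> S then X else Y) = (\<Sum>d\<in>UNIV. (if d \<in> S then X - Y else 0) + Y)"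
    by (intro sum.cong) auto
  also have "\<dots> = (\<Sum>d\<in>UNIV \<inter> S. X - Y) + real CARD('a) * Y"
    by (simp only: sum.distrib sum.inter_restrict[OF finite]) simp
  finally show ?thesis by (simp add: algebra_simps)
qed

lemma card_field_ge_2: "CARD('a::{field,finite}) \<ge> 2"
proof -
  have "card {0, 1::'a} \<le> CARD('a)" by (rule card_mono) auto
  then show ?thesis by simp
qed

lemma card_mult_eq:
  fixes z :: "'a::{field,finite}"
  shows "real (card {(b, c). b * c = z}) = (if z = 0 then 2 * real CARD('a) - 1 else real CARD('a) - 1)"
proof (cases "z = 0")
  case True
  have "{(b, c). b * c = z} = ({0} \<times> UNIV) \<union> (UNIV \<times> {0})" using True by auto
  moreover have "card (({0} \<times> UNIV) \<union> (UNIV \<times> {0}) :: ('a \<times> 'a) set) = 2 * CARD('a) - 1"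
    using card_Un_Int[of "{0} \<times> (UNIV :: 'a set)" "(UNIV :: 'a set) \<times> {0}"]
    by (simp add: card_cartesian_product Times_Int_Times)
  ultimately show ?thesis
    using True card_field_ge_2[where 'a='a] by (simp add: of_nat_diff)
next
  case False
  have "bij_betw (\<lambda>b. (b, z / b)) (UNIV - {0}) {(b, c). b * c = z}"
    by (rule bij_betw_byWitness[where f'=fst]) (auto simp: False field_simps)
  then have "card {(b, c). b * c = z} = card (UNIV - {0::'a})" by (simp add: bij_betw_same_card)
  then show ?thesis
    using False card_field_ge_2[where 'a='a] by (simp add: card_Diff_subset of_nat_diff)
qed

definition mat2 :: "'a \<Rightarrow> 'a \<Rightarrow> 'a \<Rightarrow> 'a \<Rightarrow> 'a^2^2" where
  "mat2 a b c d = (\<chi> i j. if i = 1 then (if j = 1 then a else b) else (if j = 1 then c else d))"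

lemma mat2_nth [simp]:
  "mat2 a b c d $ 1 $ 1 = a" "mat2 a b c d $ 1 $ 2 = b" "mat2 a b c d $ 2 $ 1 = c" "mat2 a b c d $ 2 $ 2 = d"
  by (simp_all add: mat2_def)

lemma mat2_eta: "mat2 (X $ 1 $ 1) (X $ 1 $ 2) (X $ 2 $ 1) (X $ 2 $ 2) = X"
  by (simp add: vec_eq_iff forall_2)

lemma card_singular_mat2_diag:
  fixes R :: "'a::{field,finite} \<Rightarrow> 'a \<Rightarrow> bool"
  shows "real (card {X::'a^2^2. R (X $ 1 $ 1) (X $ 2 $ 2) \<and> det X = 0}) =
    (\<Sum>a\<in>UNIV. \<Sum>d\<in>UNIV. if R a d then (if a * d = 0 then 2 * real CARD('a) - 1 else real CARD('a) - 1) else 0)"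
proof -
  let ?S = "Sigma {(a, d). R a d} (\<lambda>(a, d). {(b, c). b * c = a * d})"
  have "bij_betw (\<lambda>X. ((X $ 1 $ 1, X $ 2 $ 2), (X $ 1 $ 2, X $ 2 $ 1)))
      {X::'a^2^2. R (X $ 1 $ 1) (X $ 2 $ 2) \<and> det X = 0} ?S"
    by (rule bij_betw_byWitness[where f'="\<lambda>((a, d), (b, c)). mat2 a b c d"])
      (auto simp: mat2_eta det_2)
  then have "card {X::'a^2^2. R (X $ 1 $ 1) (X $ 2 $ 2) \<and> det X = 0} = card ?S"
    by (rule bij_betw_same_card)
  also have "\<dots> = (\<Sum>p\<in>{(a, d). R a d}. card {(b, c). b * c = fst p * snd p})"
    by (subst card_SigmaI) (auto simp: split_beta)
  finally have "real (card {X::'a^2^2. R (X $ 1 $ 1) (X $ 2 $ 2) \<and> det X = 0})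
      = (\<Sum>p\<in>UNIV. if p \<in> {(a, d). R a d} then real (card {(b, c). b * c = fst p * snd p}) else 0)"
    using sum.inter_restrict[of "UNIV :: ('a \<times> 'a) set"
        "\<lambda>p. real (card {(b, c). b * c = fst p * snd p})" "{(a, d). R a d}"]
    by simp
  also have "\<dots> = (\<Sum>a\<in>UNIV. \<Sum>d\<in>UNIV. if R a d then real (card {(b, c). b * c = a * d}) else 0)"
    by (simp add: split_beta sum.cartesian_product UNIV_Times_UNIV[symmetric] del: UNIV_Times_UNIV)
  finally show ?thesis by (simp only: card_mult_eq)
qed

lemma card_singular_mat2:
  "real (card {X::'a::{field,finite}^2^2. det X = 0}) = real CARD('a) ^ 3 + real CARD('a) ^ 2 - real CARD('a)"
proof -
  let ?q = "real CARD('a)"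
  have row: "(\<Sum>d\<in>UNIV. if True then (if a * d = 0 then 2 * ?q - 1 else ?q - 1) else 0) =
      (if a = 0 then ?q * (2 * ?q - 1) else (2 * ?q - 1) + (?q - 1) * (?q - 1))" for a :: 'a
    by (cases "a = 0") (simp_all add: sum_if_eq_real)
  show ?thesis
    using card_singular_mat2_diag[of "\<lambda>_ (_::'a). True"]
    by (simp only: row sum_if_eq_real simp_thms) (simp add: algebra_simps power2_eq_square power3_eq_cube)
qed

lemma card_singular_trace_one:
  "real (card {X::'a::{field,finite}^2^2. X $ 1 $ 1 + X $ 2 $ 2 = 1 \<and> det X = 0})
    = real CARD('a) ^ 2 + real CARD('a)"
proof -
  let ?q = "real CARD('a)"
  have row: "(\<Sum>d\<in>UNIV. if a + d = 1 then (if a * d = 0 then 2 * ?q - 1 else ?q - 1) else 0) =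
      (if a \<in> {0, 1} then 2 * ?q - 1 else ?q - 1)" for a :: 'a
  proof -
    have "(\<Sum>d\<in>UNIV. if a + d = 1 then (if a * d = 0 then 2 * ?q - 1 else ?q - 1) else 0)
        = (\<Sum>d\<in>UNIV. if d = 1 - a then (if a * (1 - a) = 0 then 2 * ?q - 1 else ?q - 1) else 0)"
      by (intro sum.cong) (auto simp: algebra_simps)
    then show ?thesis by (auto simp: right_diff_distrib)
  qed
  have "card {0, 1::'a} = 2" by simp
  then show ?thesis
    using card_singular_mat2_diag[of "\<lambda>a (d::'a). a + d = 1"]
    by (simp only: row sum_if_mem_real) (simp add: algebra_simps power2_eq_square)
qed

lemma card_singular_corner_zero:
  "real (card {X::'a::{field,finite}^2^2. X $ 2 $ 2 = 0 \<and> det X = 0})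
    = 2 * real CARD('a) ^ 2 - real CARD('a)"
  using card_singular_mat2_diag[of "\<lambda>a (d::'a). d = 0"]
  by (simp add: algebra_simps power2_eq_square)

definition singular_splittings :: "'a::field^'n::finite^'n \<Rightarrow> ('a^'n^'n) set" where
  "singular_splittings D = {X. det X = 0 \<and> det (D - X) = 0}"

lemma matrix_diff_ldistrib:
  fixes A B C :: "'a::comm_ring_1^'n::finite^'n"
  shows "A ** (B - C) = A ** B - A ** C"
  by (simp add: matrix_matrix_mult_def vec_eq_iff sum_subtractf algebra_simps)

lemma matrix_diff_rdistrib:
  fixes A B C :: "'a::comm_ring_1^'n::finite^'n"
  shows "(B - C) ** A = B ** A - C ** A"
  by (simp add: matrix_matrix_mult_def vec_eq_iff sum_subtractf algebra_simps)

lemma card_singular_splittings_equiv: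
  fixes P Q D :: "'a::{field,finite}^'n::finite^'n"
  assumes "invertible P" "invertible Q"
  shows "card (singular_splittings (P ** D ** Q)) = card (singular_splittings D)"
proof -
  define f where "f X = P ** X ** Q" for X
  obtain P' Q' where P': "P' ** P = mat 1" "P ** P' = mat 1" and Q': "Q ** Q' = mat 1" "Q' ** Q = mat 1"
    using assms unfolding invertible_def by blast
  have "det P \<noteq> 0" "det Q \<noteq> 0" using assms by (simp_all add: invertible_det_nz)
  moreover have "f D - f X = f (D - X)" for X
    by (simp add: f_def matrix_diff_ldistrib matrix_diff_rdistrib)
  ultimately have mem: "f X \<in> singular_splittings (f D) \<longleftrightarrow> X \<in> singular_splittings D" for X
    by (simp add: singular_splittings_def f_def det_mul)
  have "f (P' ** Y ** Q') = Y" for Y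
    by (metis f_def P'(2) Q'(2) matrix_mul_assoc matrix_mul_lid matrix_mul_rid)
  then have "f ` singular_splittings D = singular_splittings (f D)"
    using mem by (metis (no_types, lifting) image_eqI subsetI subset_antisym image_subset_iff)
  moreover have "inj f"
    by (rule inj_on_inverseI[where g="\<lambda>Y. P' ** Y ** Q'"])
      (metis f_def P'(1) Q'(1) matrix_mul_assoc matrix_mul_lid matrix_mul_rid)
  ultimately show ?thesis
    by (metis f_def card_image inj_on_subset subset_UNIV)
qed

lemma invertible_mat2_iff: "invertible (mat2 a b c d :: 'a::field^2^2) \<longleftrightarrow> a * d - b * c \<noteq> 0"
  by (simp add: invertible_det_nz det_2)

lemma matrix_mul_mat2_corner:
  fixes P Q :: "'a::comm_ring_1^2^2"
  shows "P ** mat2 1 0 0 0 ** Q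
    = mat2 (P $ 1 $ 1 * Q $ 1 $ 1) (P $ 1 $ 1 * Q $ 1 $ 2) (P $ 2 $ 1 * Q $ 1 $ 1) (P $ 2 $ 1 * Q $ 1 $ 2)"
  by (simp add: vec_eq_iff forall_2 matrix_matrix_mult_def sum_2 mat2_def)

lemma singular_mat2_equiv_corner:
  fixes D :: "'a::field^2^2"
  assumes "D \<noteq> 0" and "det D = 0"
  obtains P Q where "invertible P" "invertible Q" "D = P ** mat2 1 0 0 0 ** Q"
proof -
  obtain a b c d where D: "D = mat2 a b c d" using mat2_eta by metis
  have ad: "a * d = b * c" using \<open>det D = 0\<close> by (simp add: D det_2)
  show ?thesis
  proof (cases "a = 0 \<and> b = 0")
    case True
    then have "c \<noteq> 0 \<or> d \<noteq> 0" using \<open>D \<noteq> 0\<close> by (auto simp: D vec_eq_iff forall_2)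
    then show ?thesis
      using that[of "mat2 0 1 1 0" "if c \<noteq> 0 then mat2 c d 0 1 else mat2 c d 1 0"] True
      by (auto simp: invertible_mat2_iff matrix_mul_mat2_corner D)
  next
    case False
    define t where "t = (if a \<noteq> 0 then c / a else d / b)"
    have "c = t * a" "d = t * b" using False ad by (auto simp: t_def field_simps)
    then show ?thesis
      using that[of "mat2 1 0 t 1" "if a \<noteq> 0 then mat2 a b 0 1 else mat2 a b 1 0"] False
      by (auto simp: invertible_mat2_iff matrix_mul_mat2_corner D)
  qed
qed

lemma card_singular_splittings:
  fixes D :: "'a::{field,finite}^2^2"
  defines "q \<equiv> real CARD('a)"
  shows "real (card (singular_splittings D)) =
    (if D = 0 then q ^ 3 + q ^ 2 - q else if det D \<noteq> 0 then q ^ 2 + q else 2 * q ^ 2 - q)"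
proof -
  consider "D = 0" | "det D \<noteq> 0" | "D \<noteq> 0" "det D = 0" by blast
  then show ?thesis
  proof cases
    case 1
    then have "singular_splittings D = {X. det X = 0}"
      by (auto simp: singular_splittings_def det_2 algebra_simps)
    then show ?thesis using 1 card_singular_mat2 by (simp add: q_def)
  next
    case 2
    then have "card (singular_splittings D) = card (singular_splittings (mat 1 :: 'a^2^2))"
      using card_singular_splittings_equiv[of D "mat 1" "mat 1"] by (simp add: invertible_det_nz)
    moreover have "det (mat 1 - X) = 1 - (X $ 1 $ 1 + X $ 2 $ 2) + det X" for X :: "'a^2^2"
      by (simp add: det_2 mat_def algebra_simps)
    then have "singular_splittings (mat 1) = {X::'a^2^2. X $ 1 $ 1 + X $ 2 $ 2 = 1 \<and> det X = 0}"
      by (auto simp: singular_splittings_def)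
    moreover have "D \<noteq> 0" using 2 by (auto simp: det_2)
    ultimately show ?thesis
      using 2 card_singular_trace_one[where 'a='a] by (simp add: q_def)
  next
    case 3
    then obtain P Q where "invertible P" "invertible Q" "D = P ** mat2 1 0 0 0 ** Q"
      by (rule singular_mat2_equiv_corner)
    then have "card (singular_splittings D) = card (singular_splittings (mat2 1 0 0 (0::'a)))"
      using card_singular_splittings_equiv by metis
    moreover have "det (mat2 1 0 0 0 - X) = det X - X $ 2 $ 2" for X :: "'a^2^2"
      by (simp add: det_2 algebra_simps)
    then have "singular_splittings (mat2 1 0 0 0) = {X::'a^2^2. X $ 2 $ 2 = 0 \<and> det X = 0}"
      by (auto simp: singular_splittings_def)
    ultimately show ?thesis
      using 3 card_singular_corner_zero[where 'a='a] by (simp add: q_def)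
  qed
qed

lemma card_matrices_2x2: "real CARD('a::finite^2^2) = real CARD('a) ^ 4"
  by (simp add: CARD_vec power_mult[symmetric])

lemma card_invertible_mat2:
  "real (card {X::'a::{field,finite}^2^2. det X \<noteq> 0})
    = real CARD('a) ^ 4 - (real CARD('a) ^ 3 + real CARD('a) ^ 2 - real CARD('a))"
proof -
  have "{X::'a^2^2. det X \<noteq> 0} = UNIV - {X. det X = 0}" by auto
  then have "card {X::'a^2^2. det X \<noteq> 0} = CARD('a^2^2) - card {X::'a^2^2. det X = 0}"
    by (simp add: card_Diff_subset)
  moreover have "card {X::'a^2^2. det X = 0} \<le> CARD('a^2^2)" by (rule card_mono) auto
  ultimately show ?thesis
    by (simp add: of_nat_diff card_matrices_2x2 card_singular_mat2[symmetric])
qed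

lemma card_invertible_splittings:
  fixes D :: "'a::{field,finite}^2^2"
  shows "real (card {X. det X \<noteq> 0 \<and> det (D - X) \<noteq> 0}) = real CARD('a) ^ 4
    - 2 * (real CARD('a) ^ 3 + real CARD('a) ^ 2 - real CARD('a)) + real (card (singular_splittings D))"
proof -
  let ?A = "{X::'a^2^2. det X = 0}" and ?B = "{X::'a^2^2. det (D - X) = 0}"
  have "bij_betw (\<lambda>X. D - X) ?B ?A"
    by (rule bij_betw_byWitness[where f'="\<lambda>X. D - X"]) auto
  then have "card ?B = card ?A" by (rule bij_betw_same_card)
  moreover have "card ?A + card ?B = card (?A \<union> ?B) + card (singular_splittings D)"
    unfolding singular_splittings_def by (subst card_Un_Int) (auto intro!: arg_cong[where f=card])
  moreover have "{X. det X \<noteq> 0 \<and> det (D - X) \<noteq> 0} = UNIV - (?A \<union> ?B)" by auto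
  then have "card {X. det X \<noteq> 0 \<and> det (D - X) \<noteq> 0} = CARD('a^2^2) - card (?A \<union> ?B)"
    by (simp add: card_Diff_subset)
  moreover have "card (?A \<union> ?B) \<le> CARD('a^2^2)" by (rule card_mono) auto
  ultimately show ?thesis
    by (simp add: of_nat_diff card_matrices_2x2 card_singular_mat2[symmetric])
qed

section \<open>The unit-graph is strongly regular\<close>

lemma unit_graph_adjmat_nth:
  "(unit_graph_adjmat :: real^('a::{field,finite}^2^2)^('a^2^2)) $ A $ B = of_bool (det (B - A) \<noteq> 0)"
  by (simp add: unit_graph_adjmat_def unit_graph_adj_def invertible_det_nz)

lemma card_shift_mat2:
  fixes P :: "'a::{field,finite}^2^2 \<Rightarrow> bool"
  shows "card {B. P (B - A)} = card {X. P X}" and "card {A. P (B - A)} = card {X. P X}"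
proof -
  have "bij_betw (\<lambda>B. B - A) {B. P (B - A)} {X. P X}"
    by (rule bij_betw_byWitness[where f'="\<lambda>X. X + A"]) auto
  then show "card {B. P (B - A)} = card {X. P X}" by (rule bij_betw_same_card)
  have "bij_betw (\<lambda>A. B - A) {A. P (B - A)} {X. P X}"
    by (rule bij_betw_byWitness[where f'="\<lambda>X. B - X"]) auto
  then show "card {A. P (B - A)} = card {X. P X}" by (rule bij_betw_same_card)
qed

lemma unit_graph_adjmat_row_sum:
  "(\<Sum>B\<in>UNIV. (unit_graph_adjmat :: real^('a::{field,finite}^2^2)^('a^2^2)) $ A $ B)
    = real CARD('a) ^ 4 - real CARD('a) ^ 3 - real CARD('a) ^ 2 + real CARD('a)"
  using card_invertible_mat2[where 'a='a]
  by (simp add: unit_graph_adjmat_nth card_shift_mat2(1)[of "\<lambda>X. det X \<noteq> 0"])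

lemma unit_graph_adjmat_col_sum:
  "(\<Sum>A\<in>UNIV. (unit_graph_adjmat :: real^('a::{field,finite}^2^2)^('a^2^2)) $ A $ B)
    = real CARD('a) ^ 4 - real CARD('a) ^ 3 - real CARD('a) ^ 2 + real CARD('a)"
  using card_invertible_mat2[where 'a='a]
  by (simp add: unit_graph_adjmat_nth card_shift_mat2(2)[of "\<lambda>X. det X \<noteq> 0"])

lemma trace_unit_graph_adjmat:
  "trace (unit_graph_adjmat :: real^('a::{field,finite}^2^2)^('a^2^2)) = 0"
  by (simp add: trace_def unit_graph_adjmat_nth det_2)

lemma unit_graph_adjmat_square:
  fixes M :: "real^('a::{field,finite}^2^2)^('a^2^2)"
  defines "M \<equiv> unit_graph_adjmat" and "q \<equiv> real CARD('a)"
  shows "M ** M = comb_IMJ M (- (q * (q - q ^ 2))) (q + (q - q ^ 2)) (q ^ 4 - 2 * q ^ 3 + q)"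
proof -
  have "(M ** M) $ A $ C = comb_IMJ M (- (q * (q - q ^ 2))) (q + (q - q ^ 2)) (q ^ 4 - 2 * q ^ 3 + q) $ A $ C"
    for A C
  proof -
    have "(M ** M) $ A $ C = real (card {B. det (B - A) \<noteq> 0 \<and> det ((C - A) - (B - A)) \<noteq> 0})"
      by (simp add: matrix_matrix_mult_def M_def unit_graph_adjmat_nth flip: of_bool_conj)
    also have "\<dots> = q ^ 4 - 2 * (q ^ 3 + q ^ 2 - q) + real (card (singular_splittings (C - A)))"
      by (simp only: card_shift_mat2(1)[of "\<lambda>X. det X \<noteq> 0 \<and> det ((C - A) - X) \<noteq> 0"]
          card_invertible_splittings q_def)
    finally show ?thesis
      unfolding card_singular_splittings comb_IMJ_def
      by (cases "C - A = 0"; cases "det (C - A) = 0")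
        (simp_all add: M_def unit_graph_adjmat_nth q_def det_2 algebra_simps power2_eq_square
          power3_eq_cube power4_eq_xxxx)
  qed
  then show ?thesis by (simp add: vec_eq_iff)
qed

lemma of_nat_unit_graph_multiplicities:
  fixes q :: nat
  assumes "q \<ge> 2"
  shows "real (q ^ 4 - q ^ 3 - q ^ 2 + q) = real q ^ 4 - real q ^ 3 - real q ^ 2 + real q"
    and "real (q ^ 3 + q ^ 2 - q - 1) = real q ^ 3 + real q ^ 2 - real q - 1"
proof -
  have "q ^ 2 \<le> q ^ 3" "2 * q ^ 3 \<le> q ^ 4" "2 * q \<le> q ^ 2"
    using assms mult_right_mono[of 2 q "q ^ 3"] mult_right_mono[of 2 q q]
    by (simp_all add: power_increasing power_numeral_reduce)
  then have "q ^ 3 + q ^ 2 \<le> q ^ 4" "q + 1 \<le> q ^ 3 + q ^ 2"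
    using assms by linarith+
  then show "real (q ^ 4 - q ^ 3 - q ^ 2 + q) = real q ^ 4 - real q ^ 3 - real q ^ 2 + real q"
    and "real (q ^ 3 + q ^ 2 - q - 1) = real q ^ 3 + real q ^ 2 - real q - 1"
    by (simp_all add: of_nat_diff)
qed

theorem corollary3p7:
  fixes q :: nat
  assumes "q = CARD('a::{field, finite})"
  shows "charpoly (unit_graph_adjmat :: real ^ ('a ^2^2) ^ ('a ^2^2)) =
    [:- (real q ^ 4 - real q ^ 3 - real q ^ 2 + real q), 1:] ^ 1
    * [:- real q, 1:] ^ (q ^ 4 - q ^ 3 - q ^ 2 + q)
    * [:- (real q - real q ^ 2), 1:] ^ (q ^ 3 + q ^ 2 - q - 1)"
proof -
  have "q \<ge> 2" using assms card_field_ge_2[where 'a='a] by simp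
  note multiplicities = of_nat_unit_graph_multiplicities[OF this]
  have "real q \<noteq> 0" using \<open>q \<ge> 2\<close> by simp
  show ?thesis
    unfolding power_one_right
  proof (rule charpoly_eq_if_quadratic_mod_all_ones[OF unit_graph_adjmat_square[where 'a='a]
        unit_graph_adjmat_row_sum unit_graph_adjmat_col_sum trace_unit_graph_adjmat, folded assms])
    show "real q \<noteq> real q - real q ^ 2" using \<open>real q \<noteq> 0\<close> by simp
    show "real (q ^ 4 - q ^ 3 - q ^ 2 + q)
        = (- (real CARD('a^2^2) - 1) * (real q - real q ^ 2) - (real q ^ 4 - real q ^ 3 - real q ^ 2 + real q))
          / (real q - (real q - real q ^ 2))"
      unfolding multiplicities(1) card_matrices_2x2 assms[symmetric] using \<open>real q \<noteq> 0\<close>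
      by (simp add: field_simps) (simp add: algebra_simps power_numeral_reduce)
    show "real (q ^ 3 + q ^ 2 - q - 1)
        = (- (real CARD('a^2^2) - 1) * real q - (real q ^ 4 - real q ^ 3 - real q ^ 2 + real q))
          / (real q - real q ^ 2 - real q)"
      unfolding multiplicities(2) card_matrices_2x2 assms[symmetric] using \<open>real q \<noteq> 0\<close>
      by (simp add: field_simps) (simp add: algebra_simps power_numeral_reduce)
  qed
qed

end
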